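(* Let $p$ be prime and $H\le\mathrm{S}_n$ be in $\mathfrak{InP}(\mathrm{C}_p)$, let $\gamma$ be as in the context and $M$ a generator matrix of $\gamma(H)$. Let $I,J\subseteq\{1,\dots,k\}$ be such that there exists $\nu\in N_{\mathrm{S}_n}(H)$ with $\Omega_I^\nu=\Omega_J$. Then the rank of $M_{*,I}$ equals the rank of $M_{*,J}$. Hence the columns of $M_{*,I}$ are minimally linearly dependent if and only if the columns of $M_{*,J}$ are minimally linearly dependent.
   Context: $H\le\mathrm{S}_{n}$, $n=pk$, has orbits $\Omega_1,\dots,\Omega_k$ of size $p$ with each $G_i:=H|_{\Omega_i}$ cyclic of order $p$; $G=G_1\times\dots\times G_k$, $g_i$ a generator of $G_i$, and $\gamma:G\to\mathbb{F}_p^k$ is $\gamma(g_1^{r_1}\cdots g_k^{r_k})=(r_1,\dots,r_k)$. A generator matrix has rows forming a basis of $\gamma(H)$. For $I\subseteq\{1,\dots,k\}$, $\Omega_I=\bigcup_{i\in I}\Omega_i$ and $M_{*,I}$ is the submatrix of $M$ formed by the columns indexed by $I$. A set of vectors is minimally linearly dependent if it is linearly dependent but no proper subset is. *)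

theory Defs
  imports "Berlekamp_Zassenhaus.Finite_Field" "Jordan_Normal_Form.DL_Rank" "Jordan_Normal_Form.DL_Submatrix"
begin

definition perm_subgroup :: "nat \<Rightarrow> (nat \<Rightarrow> nat) set \<Rightarrow> bool" where
  "perm_subgroup n H \<longleftrightarrow> (\<forall>h\<in>H. h permutes {0..<n}) \<and> id \<in> H \<and>
     (\<forall>h\<in>H. \<forall>h'\<in>H. h \<circ> h' \<in> H) \<and> (\<forall>h\<in>H. inv_into UNIV h \<in> H)"

definition orbit_of :: "(nat \<Rightarrow> nat) set \<Rightarrow> nat \<Rightarrow> nat set" where
  "orbit_of H x = {h x | h. h \<in> H}"

definition restr :: "nat set \<Rightarrow> (nat \<Rightarrow> nat) \<Rightarrow> (nat \<Rightarrow> nat)" where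
  "restr A h = (\<lambda>x. if x \<in> A then h x else x)"

text \<open>The setting of the context: H \<le> S_n, n = p k, orbits \<Omega>_0,...,\<Omega>_(k-1)
  (0-based), each of size p, with H|\<Omega>_i cyclic of order p generated by g i.\<close>
definition InP_Cp_setting ::
  "nat \<Rightarrow> nat \<Rightarrow> nat \<Rightarrow> (nat \<Rightarrow> nat) set \<Rightarrow> (nat \<Rightarrow> nat set) \<Rightarrow> (nat \<Rightarrow> nat \<Rightarrow> nat) \<Rightarrow> bool" where
  "InP_Cp_setting p k n H \<Omega> g \<longleftrightarrow>
     prime p \<and> n = p * k \<and> perm_subgroup n H \<and>
     (\<forall>i<k. \<exists>x<n. \<Omega> i = orbit_of H x) \<and>
     (\<forall>x<n. \<exists>i<k. x \<in> \<Omega> i) \<and>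
     (\<forall>i<k. \<forall>j<k. i \<noteq> j \<longrightarrow> \<Omega> i \<inter> \<Omega> j = {}) \<and>
     (\<forall>i<k. card (\<Omega> i) = p) \<and>
     (\<forall>i<k. g i \<in> restr (\<Omega> i) ` H \<and>
            restr (\<Omega> i) ` H = range (\<lambda>r. g i ^^ r) \<and>
            card (restr (\<Omega> i) ` H) = p)"

text \<open>gamma(g_1^r_1 ... g_k^r_k) = (r_1,...,r_k) in F_p^k (F_p = 'p mod_ring).\<close>
definition gamma :: "nat \<Rightarrow> (nat \<Rightarrow> nat set) \<Rightarrow> (nat \<Rightarrow> nat \<Rightarrow> nat) \<Rightarrow> (nat \<Rightarrow> nat)
    \<Rightarrow> 'p::prime_card mod_ring vec" where
  "gamma k \<Omega> g h = vec k (\<lambda>i. of_nat (LEAST r. restr (\<Omega> i) h = g i ^^ r))"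

definition generator_matrix :: "nat \<Rightarrow> 'a::field vec set \<Rightarrow> 'a mat \<Rightarrow> bool" where
  "generator_matrix k C M \<longleftrightarrow> dim_col M = k \<and> distinct (rows M) \<and>
     module.lin_indpt class_ring (module_vec TYPE('a) k) (set (rows M)) \<and>
     LinearCombinations.module.span class_ring (module_vec TYPE('a) k) (set (rows M)) = C"

definition cols_sub :: "'a mat \<Rightarrow> nat set \<Rightarrow> 'a mat" where
  "cols_sub M I = submatrix M UNIV I"

definition mat_rank :: "'a::field mat \<Rightarrow> nat" where
  "mat_rank A = vec_space.rank (dim_row A) A"

definition cols_lin_dep :: "'a::field mat \<Rightarrow> nat set \<Rightarrow> bool" where
  "cols_lin_dep A S \<longleftrightarrow> (\<exists>c. (\<exists>j\<in>S. c j \<noteq> 0) \<and>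
      (\<forall>r<dim_row A. (\<Sum>j\<in>S. c j * A $$ (r, j)) = 0))"

definition cols_min_lin_dep :: "'a::field mat \<Rightarrow> bool" where
  "cols_min_lin_dep A \<longleftrightarrow> cols_lin_dep A {0..<dim_col A} \<and>
      (\<forall>S. S \<subset> {0..<dim_col A} \<longrightarrow> \<not> cols_lin_dep A S)"

end

(*
  A permutation \<nu> normalizing H permutes the H-orbits, so it maps the orbits indexed by I
  bijectively onto those indexed by J, say \<Omega> i onto \<Omega> (\<sigma> i).  Conjugation by \<nu> sends the
  generator g i of H restricted to \<Omega> i to a power g (\<sigma> i) ^^ e with e prime to p; hence the
  \<sigma> i-th coordinate of gamma of the conjugate of h is e times the i-th coordinate of gamma h.

  A set S of columns of M is linearly dependent iff some nonzero linear form supported on S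
  vanishes on the row space gamma(H).  So S and \<sigma> ` S index dependent columns simultaneously.
  The rank of M restricted to the columns I (the largest size of an independent subset of I)
  and the minimal dependence of these columns only depend on which subsets of I index
  dependent columns, which gives both claims.
*)

theory Submission
  imports Defs
begin

section \<open>Linear dependence of columns and rank\<close>

lemma cols_lin_dep_if_col_eq:
  fixes A :: "'a::field mat"
  assumes "s \<in> T" "t \<in> T" "s \<noteq> t" "s < dim_col A" "t < dim_col A" "col A s = col A t"
  shows "cols_lin_dep A T"
  unfolding cols_lin_dep_def
proof (intro exI conjI allI impI)
  let ?c = "\<lambda>j. if j = s then 1 else if j = t then -1 else (0::'a)"
  show "\<exists>j\<in>T. ?c j \<noteq> 0" using assms(1) by (intro bexI[of _ s]) simp_all
  fix r assume "r < dim_row A"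
  then have "A $$ (r, s) = A $$ (r, t)" using assms(4-6) by (metis col_def index_vec)
  then have "?c j * A $$ (r, j) = (if j = s then A $$ (r, t) else 0) - (if j = t then A $$ (r, t) else 0)" for j
    using assms(3) by simp
  then show "(\<Sum>j\<in>T. ?c j * A $$ (r, j)) = 0"
    using assms(1,2) by (cases "finite T") (simp_all add: sum_subtractf)
qed

lemma cols_lin_dep_iff_lin_dep_col_image:
  fixes A :: "'a::field mat"
  assumes T: "T \<subseteq> {0..<dim_col A}" and inj: "inj_on (col A) T"
  shows "cols_lin_dep A T \<longleftrightarrow> module.lin_dep class_ring (module_vec TYPE('a) (dim_row A)) (col A ` T)"
proof -
  interpret V: vec_space "TYPE('a)" "dim_row A" .
  have fin: "finite (col A ` T)" using T finite_subset by blast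
  have car: "col A ` T \<subseteq> carrier_vec (dim_row A)" by auto
  have lincomb: "V.lincomb a (col A ` T) $ r = (\<Sum>j\<in>T. a (col A j) * A $$ (r, j))"
    if "r < dim_row A" for a r
    using that T by (simp add: V.lincomb_index[OF that car] sum.reindex[OF inj] subset_iff)
  show ?thesis
  proof
    assume "cols_lin_dep A T"
    then obtain c where c: "\<exists>j\<in>T. c j \<noteq> 0" "\<And>r. r < dim_row A \<Longrightarrow> (\<Sum>j\<in>T. c j * A $$ (r, j)) = 0"
      unfolding cols_lin_dep_def by blast
    define a where "a = c \<circ> the_inv_into T (col A)"
    have a: "a (col A j) = c j" if "j \<in> T" for j
      using that inj by (simp add: a_def the_inv_into_f_f)
    obtain j where j: "j \<in> T" "c j \<noteq> 0" using c(1) by blast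
    have "V.lincomb a (col A ` T) = 0\<^sub>v (dim_row A)"
      by (rule eq_vecI) (simp_all add: lincomb a c(2) V.lincomb_dim[OF fin car] cong: sum.cong)
    then show "V.lin_dep (col A ` T)"
      using j a by (intro V.lin_dep_crit[OF fin subset_refl, where v = "col A j"]) auto
  next
    assume "V.lin_dep (col A ` T)"
    then obtain a v where a: "V.lincomb a (col A ` T) = 0\<^sub>v (dim_row A)" "v \<in> col A ` T" "a v \<noteq> 0"
      using V.finite_lin_dep[OF fin _ car] by auto
    show "cols_lin_dep A T"
      unfolding cols_lin_dep_def
    proof (intro exI conjI allI impI)
      show "\<exists>j\<in>T. a (col A j) \<noteq> 0" using a(2,3) by blast
      fix r assume "r < dim_row A"
      then show "(\<Sum>j\<in>T. a (col A j) * A $$ (r, j)) = 0"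
        using lincomb[of r a] a(1) by simp
    qed
  qed
qed

lemma mat_rank_eq_Max_card_cols_lin_indep:
  fixes A :: "'a::field mat"
  shows "mat_rank A = Max (card ` {T. T \<subseteq> {0..<dim_col A} \<and> \<not> cols_lin_dep A T})"
proof -
  interpret V: vec_space "TYPE('a)" "dim_row A" .
  have A: "A \<in> carrier_mat (dim_row A) (dim_col A)" by simp
  have cols: "set (cols A) = col A ` {0..<dim_col A}" by (simp add: cols_def)
  have indep_le: "card T \<le> mat_rank A" if T: "T \<subseteq> {0..<dim_col A}" "\<not> cols_lin_dep A T" for T
  proof -
    have inj: "inj_on (col A) T"
      using T cols_lin_dep_if_col_eq by (fastforce intro: inj_onI)
    then have "V.lin_indpt (col A ` T)"
      using T cols_lin_dep_iff_lin_dep_col_image by blast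
    moreover have "col A ` T \<subseteq> set (cols A)" using T(1) cols by blast
    ultimately have "card (col A ` T) \<le> mat_rank A"
      unfolding mat_rank_def by (intro V.rank_ge_card_indpt[OF A])
    then show ?thesis using card_image[OF inj] by simp
  qed
  obtain S where S: "maximal S (\<lambda>S. S \<subseteq> set (cols A) \<and> V.lin_indpt S)"
    using maximal_exists[of "\<lambda>S. S \<subseteq> set (cols A) \<and> V.lin_indpt S" "card (set (cols A))" "{}"]
    by (meson List.finite_set card_mono empty_iff empty_subsetI V.finite_lin_indpt2 rev_finite_subset)
  then have "S \<subseteq> col A ` {0..<dim_col A}" "V.lin_indpt S"
    using cols unfolding maximal_def by auto
  then obtain T where T: "T \<subseteq> {0..<dim_col A}" "inj_on (col A) T" "S = col A ` T" "V.lin_indpt S"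
    using subset_image_inj by metis
  have "\<not> cols_lin_dep A T"
    using cols_lin_dep_iff_lin_dep_col_image[OF T(1,2)] T(3,4) by simp
  moreover have "card T = mat_rank A"
    using V.rank_card_indpt[OF A S] card_image[OF T(2)] T(3) by (simp add: mat_rank_def)
  moreover have "finite {T. T \<subseteq> {0..<dim_col A} \<and> \<not> cols_lin_dep A T}"
    by (rule finite_subset[of _ "Pow {0..<dim_col A}"]) auto
  ultimately show ?thesis
    using indep_le T(1) by (intro Max_eqI[symmetric]) (auto intro!: image_eqI[of _ card T])
qed

definition coords_lin_dep :: "'a::field vec set \<Rightarrow> nat set \<Rightarrow> bool" where
  "coords_lin_dep C S \<longleftrightarrow> (\<exists>c. (\<exists>j\<in>S. c j \<noteq> 0) \<and> (\<forall>v\<in>C. (\<Sum>j\<in>S. c j * v $ j) = 0))"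

lemma coords_lin_dep_monomial:
  fixes u :: "'x \<Rightarrow> 'a::field vec" and w :: "'y \<Rightarrow> 'a vec"
  assumes img: "\<phi> ` X = Y" and inj: "inj_on \<sigma> S" and b: "\<And>i. i \<in> S \<Longrightarrow> b i \<noteq> 0"
    and entries: "\<And>x i. x \<in> X \<Longrightarrow> i \<in> S \<Longrightarrow> w (\<phi> x) $ \<sigma> i = b i * u x $ i"
  shows "coords_lin_dep (w ` Y) (\<sigma> ` S) \<longleftrightarrow> coords_lin_dep (u ` X) S"
proof -
  have sum: "(\<Sum>j\<in>\<sigma> ` S. c j * w (\<phi> x) $ j) = (\<Sum>i\<in>S. (c (\<sigma> i) * b i) * u x $ i)"
    if "x \<in> X" for c x
    using that by (simp add: sum.reindex[OF inj] entries mult.assoc)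
  show ?thesis
  proof
    assume "coords_lin_dep (w ` Y) (\<sigma> ` S)"
    then obtain c where c: "\<exists>j\<in>\<sigma> ` S. c j \<noteq> 0" "\<forall>v\<in>w ` Y. (\<Sum>j\<in>\<sigma> ` S. c j * v $ j) = 0"
      unfolding coords_lin_dep_def by blast
    show "coords_lin_dep (u ` X) S"
      unfolding coords_lin_dep_def
    proof (intro exI conjI ballI)
      show "\<exists>i\<in>S. c (\<sigma> i) * b i \<noteq> 0" using c(1) b by auto
      fix v assume "v \<in> u ` X"
      then obtain x where "x \<in> X" "v = u x" by blast
      then show "(\<Sum>i\<in>S. (c (\<sigma> i) * b i) * v $ i) = 0"
        using sum[of x c] c(2) img by auto
    qed
  next
    assume "coords_lin_dep (u ` X) S"
    then obtain c where c: "\<exists>i\<in>S. c i \<noteq> 0" "\<forall>v\<in>u ` X. (\<Sum>i\<in>S. c i * v $ i) = 0"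
      unfolding coords_lin_dep_def by blast
    define c' where "c' j = c (the_inv_into S \<sigma> j) / b (the_inv_into S \<sigma> j)" for j
    have c': "c' (\<sigma> i) * b i = c i" if "i \<in> S" for i
      using that b by (simp add: c'_def the_inv_into_f_f[OF inj])
    show "coords_lin_dep (w ` Y) (\<sigma> ` S)"
      unfolding coords_lin_dep_def
    proof (intro exI conjI ballI)
      show "\<exists>j\<in>\<sigma> ` S. c' j \<noteq> 0" using c(1) c' by force
      fix v assume "v \<in> w ` Y"
      then obtain x where "x \<in> X" "v = w (\<phi> x)" using img by blast
      then show "(\<Sum>j\<in>\<sigma> ` S. c' j * v $ j) = 0"
        using sum[of x c'] c(2) c' by (simp cong: sum.cong)
    qed
  qed
qed

lemma cols_lin_dep_iff_coords_lin_dep_rows: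
  assumes "S \<subseteq> {0..<dim_col A}"
  shows "cols_lin_dep A S \<longleftrightarrow> coords_lin_dep (row A ` {0..<dim_row A}) S"
proof -
  have "(\<Sum>j\<in>S. c j * row A r $ j) = (\<Sum>j\<in>S. c j * A $$ (r, j))" if "r < dim_row A" for c r
    using that assms by (intro sum.cong) auto
  then show ?thesis unfolding cols_lin_dep_def coords_lin_dep_def by auto
qed

lemma coords_lin_dep_span:
  fixes C :: "'a::field vec set"
  assumes C: "C \<subseteq> carrier_vec k" and S: "S \<subseteq> {0..<k}"
  shows "coords_lin_dep (module.span class_ring (module_vec TYPE('a) k) C) S \<longleftrightarrow> coords_lin_dep C S"
proof -
  interpret V: vec_space "TYPE('a)" k .
  have "(\<forall>v\<in>V.span C. (\<Sum>j\<in>S. c j * v $ j) = 0) \<longleftrightarrow> (\<forall>v\<in>C. (\<Sum>j\<in>S. c j * v $ j) = 0)" for c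
  proof
    assume "\<forall>v\<in>V.span C. (\<Sum>j\<in>S. c j * v $ j) = 0"
    then show "\<forall>v\<in>C. (\<Sum>j\<in>S. c j * v $ j) = 0" using V.in_own_span[OF C] by blast
  next
    assume zero: "\<forall>v\<in>C. (\<Sum>j\<in>S. c j * v $ j) = 0"
    show "\<forall>v\<in>V.span C. (\<Sum>j\<in>S. c j * v $ j) = 0"
    proof
      fix v assume "v \<in> V.span C"
      then obtain a A where A: "v = V.lincomb a A" "finite A" "A \<subseteq> C"
        using V.in_spanE by blast
      then have "A \<subseteq> carrier_vec k" using C by blast
      then have "(\<Sum>j\<in>S. c j * v $ j) = (\<Sum>j\<in>S. \<Sum>x\<in>A. a x * (c j * x $ j))"
        using A(1) S by (intro sum.cong) (auto simp: V.lincomb_index sum_distrib_left mult_ac)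
      also have "\<dots> = (\<Sum>x\<in>A. a x * (\<Sum>j\<in>S. c j * x $ j))"
        by (subst sum.swap) (simp add: sum_distrib_left)
      finally show "(\<Sum>j\<in>S. c j * v $ j) = 0" using zero A(3) by (simp add: subset_iff)
    qed
  qed
  then show ?thesis unfolding coords_lin_dep_def by simp
qed

lemma cols_lin_dep_generator_matrix:
  assumes "generator_matrix k C M" and "S \<subseteq> {0..<k}"
  shows "cols_lin_dep M S \<longleftrightarrow> coords_lin_dep C S"
proof -
  have "dim_col M = k" and span: "module.span class_ring (module_vec TYPE('a) k) (set (rows M)) = C"
    using assms(1) unfolding generator_matrix_def by auto
  moreover have "set (rows M) = row M ` {0..<dim_row M}" by (simp add: rows_def)
  moreover have "set (rows M) \<subseteq> carrier_vec k" using \<open>dim_col M = k\<close> by (auto simp: rows_def)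
  ultimately show ?thesis
    using assms(2) cols_lin_dep_iff_coords_lin_dep_rows coords_lin_dep_span by metis
qed

section \<open>Column submatrices\<close>

lemma subsets_eq_image_subsets_bij_betw:
  assumes "bij_betw f A B"
  shows "{T. T \<subseteq> B \<and> P T} = image f ` {T. T \<subseteq> A \<and> P (f ` T)}"
proof (intro equalityI subsetI)
  fix T assume T: "T \<in> {T. T \<subseteq> B \<and> P T}"
  then have "T \<in> image f ` Pow A"
    using image_Pow_surj[OF bij_betw_imp_surj_on[OF assms]] by simp
  then obtain U where "U \<subseteq> A" "T = f ` U" by auto
  then show "T \<in> image f ` {T. T \<subseteq> A \<and> P (f ` T)}" using T by auto
next
  fix T assume "T \<in> image f ` {T. T \<subseteq> A \<and> P (f ` T)}"
  then show "T \<in> {T. T \<subseteq> B \<and> P T}" using bij_betw_imp_surj_on[OF assms] by auto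
qed

lemma card_image_subsets_bij_betw:
  assumes "bij_betw f A B"
  shows "card ` {T. T \<subseteq> B \<and> P T} = card ` {T. T \<subseteq> A \<and> P (f ` T)}"
proof -
  have "card ` {T. T \<subseteq> B \<and> P T} = (\<lambda>T. card (f ` T)) ` {T. T \<subseteq> A \<and> P (f ` T)}"
    by (simp only: subsets_eq_image_subsets_bij_betw[OF assms] image_image)
  also have "\<dots> = card ` {T. T \<subseteq> A \<and> P (f ` T)}"
    using assms by (intro image_cong) (auto simp: bij_betw_def intro: card_image inj_on_subset)
  finally show ?thesis .
qed

lemma all_psubset_bij_betw_iff:
  assumes "bij_betw f A B"
  shows "(\<forall>S. S \<subset> B \<longrightarrow> P S) \<longleftrightarrow> (\<forall>S. S \<subset> A \<longrightarrow> P (f ` S))"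
proof -
  have psubset: "f ` S \<subset> B \<longleftrightarrow> S \<subset> A" if "S \<subseteq> A" for S
  proof -
    have "f ` S = B \<longleftrightarrow> S = A"
      using that inj_on_image_eq_iff[of f A S A] assms by (simp add: bij_betw_def)
    moreover have "f ` S \<subseteq> B" using that assms by (auto simp: bij_betw_def)
    ultimately show ?thesis using that by (simp only: psubset_eq)
  qed
  show ?thesis
  proof (intro iffI allI impI)
    fix S assume P: "\<forall>S. S \<subset> B \<longrightarrow> P S" and S: "S \<subset> A"
    then show "P (f ` S)" using psubset[of S] by simp
  next
    fix S assume P: "\<forall>S. S \<subset> A \<longrightarrow> P (f ` S)" and S: "S \<subset> B"
    have "S \<in> image f ` Pow A"
      using S bij_betw_imp_surj_on[OF bij_betw_image_Pow[OF assms]] by auto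
    then obtain T where "T \<subseteq> A" "S = f ` T" by auto
    then show "P S" using P S psubset[of T] by simp
  qed
qed

lemma bij_betw_pick:
  assumes "finite I"
  shows "bij_betw (pick I) {0..<card I} I"
proof (rule bij_betw_byWitness[where f' = "\<lambda>i. card {a\<in>I. a < i}"])
  have "card {a\<in>I. a < i} < card I" if "i \<in> I" for i
    using that assms by (intro psubset_card_mono) auto
  then show "(\<lambda>i. card {a\<in>I. a < i}) ` I \<subseteq> {0..<card I}" by auto
qed (auto simp: card_pick_le pick_in_set_le pick_card_in_set)

lemma dim_cols_sub:
  assumes "I \<subseteq> {0..<dim_col M}"
  shows "dim_row (cols_sub M I) = dim_row M" and "dim_col (cols_sub M I) = card I"
proof -
  have "{j. j < dim_col M \<and> j \<in> I} = I" using assms by auto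
  then show "dim_row (cols_sub M I) = dim_row M" "dim_col (cols_sub M I) = card I"
    unfolding cols_sub_def dim_submatrix by simp_all
qed

lemma cols_sub_index:
  assumes "I \<subseteq> {0..<dim_col M}" "r < dim_row M" "t < card I"
  shows "cols_sub M I $$ (r, t) = M $$ (r, pick I t)"
  using assms dim_cols_sub[OF assms(1)] unfolding cols_sub_def dim_submatrix
  by (simp add: submatrix_index pick_UNIV)

lemma cols_lin_dep_cols_sub:
  fixes M :: "'a::field mat"
  assumes I: "I \<subseteq> {0..<dim_col M}" and T: "T \<subseteq> {0..<card I}"
  shows "cols_lin_dep (cols_sub M I) T \<longleftrightarrow> cols_lin_dep M (pick I ` T)"
proof -
  have pick: "pick I ` T \<subseteq> I" using T pick_in_set_le by auto
  have entries: "row M r $ pick I t = row (cols_sub M I) r $ t"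
    if "r \<in> {0..<dim_row M}" "t \<in> T" for r t
  proof -
    have "t < card I" "pick I t < dim_col M" using that T I pick by (auto simp: subset_iff)
    then show ?thesis using that I by (simp add: cols_sub_index dim_cols_sub)
  qed
  have "cols_lin_dep M (pick I ` T) \<longleftrightarrow> coords_lin_dep (row M ` {0..<dim_row M}) (pick I ` T)"
    using I pick by (intro cols_lin_dep_iff_coords_lin_dep_rows) auto
  also have "\<dots> \<longleftrightarrow> coords_lin_dep (row (cols_sub M I) ` {0..<dim_row M}) T"
    using entries inj_on_subset[OF bij_betw_imp_inj_on[OF bij_betw_pick] T] finite_subset[OF I]
    by (intro coords_lin_dep_monomial[where \<phi> = id and b = "\<lambda>_. 1"]) auto
  also have "\<dots> \<longleftrightarrow> cols_lin_dep (cols_sub M I) T"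
    using T dim_cols_sub[OF I] by (simp add: cols_lin_dep_iff_coords_lin_dep_rows)
  finally show ?thesis ..
qed

lemma mat_rank_cols_sub:
  fixes M :: "'a::field mat"
  assumes I: "I \<subseteq> {0..<dim_col M}"
  shows "mat_rank (cols_sub M I) = Max (card ` {T. T \<subseteq> I \<and> \<not> cols_lin_dep M T})"
proof -
  have "mat_rank (cols_sub M I) = Max (card ` {T. T \<subseteq> {0..<card I} \<and> \<not> cols_lin_dep M (pick I ` T)})"
    using I by (simp add: mat_rank_eq_Max_card_cols_lin_indep dim_cols_sub cols_lin_dep_cols_sub cong: conj_cong)
  also have "\<dots> = Max (card ` {T. T \<subseteq> I \<and> \<not> cols_lin_dep M T})"
    using card_image_subsets_bij_betw[OF bij_betw_pick[OF finite_subset[OF I]]] by simp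
  finally show ?thesis .
qed

lemma cols_min_lin_dep_cols_sub:
  fixes M :: "'a::field mat"
  assumes I: "I \<subseteq> {0..<dim_col M}"
  shows "cols_min_lin_dep (cols_sub M I) \<longleftrightarrow> cols_lin_dep M I \<and> (\<forall>S. S \<subset> I \<longrightarrow> \<not> cols_lin_dep M S)"
proof -
  have pick: "bij_betw (pick I) {0..<card I} I" by (rule bij_betw_pick[OF finite_subset[OF I]]) simp
  have "cols_min_lin_dep (cols_sub M I) \<longleftrightarrow>
      cols_lin_dep M (pick I ` {0..<card I}) \<and> (\<forall>S. S \<subset> {0..<card I} \<longrightarrow> \<not> cols_lin_dep M (pick I ` S))"
    using I by (auto simp: cols_min_lin_dep_def dim_cols_sub cols_lin_dep_cols_sub)
  then show ?thesis
    using all_psubset_bij_betw_iff[OF pick, of "\<lambda>S. \<not> cols_lin_dep M S"] bij_betw_imp_surj_on[OF pick]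
    by simp
qed

lemma cols_sub_rank_min_lin_dep_eq:
  fixes M :: "'a::field mat"
  assumes I: "I \<subseteq> {0..<dim_col M}" and J: "J \<subseteq> {0..<dim_col M}" and \<sigma>: "bij_betw \<sigma> I J"
    and dep: "\<And>S. S \<subseteq> I \<Longrightarrow> cols_lin_dep M (\<sigma> ` S) \<longleftrightarrow> cols_lin_dep M S"
  shows "mat_rank (cols_sub M I) = mat_rank (cols_sub M J)
     \<and> (cols_min_lin_dep (cols_sub M I) \<longleftrightarrow> cols_min_lin_dep (cols_sub M J))"
proof
  have "card ` {T. T \<subseteq> J \<and> \<not> cols_lin_dep M T} = card ` {T. T \<subseteq> I \<and> \<not> cols_lin_dep M T}"
    using card_image_subsets_bij_betw[OF \<sigma>] dep by (simp cong: conj_cong)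
  then show "mat_rank (cols_sub M I) = mat_rank (cols_sub M J)"
    using I J by (simp add: mat_rank_cols_sub)
  have "(\<forall>S. S \<subset> J \<longrightarrow> \<not> cols_lin_dep M S) \<longleftrightarrow> (\<forall>S. S \<subset> I \<longrightarrow> \<not> cols_lin_dep M S)"
    using all_psubset_bij_betw_iff[OF \<sigma>] dep by auto
  moreover have "cols_lin_dep M J \<longleftrightarrow> cols_lin_dep M I"
    using dep[of I] bij_betw_imp_surj_on[OF \<sigma>] by simp
  ultimately show "cols_min_lin_dep (cols_sub M I) \<longleftrightarrow> cols_min_lin_dep (cols_sub M J)"
    using I J by (simp add: cols_min_lin_dep_cols_sub)
qed

section \<open>Permutations and orbits\<close>

lemma funpow_diff_eq_id:
  assumes "bij f" "a \<le> b" "f ^^ a = f ^^ b"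
  shows "f ^^ (b - a) = id"
proof (rule surj_fun_eq[where X = UNIV])
  show "(f ^^ a) ` UNIV = UNIV" using bij_is_surj[OF bij_fn[OF assms(1)]] .
  have "f ^^ (b - a) \<circ> f ^^ a = f ^^ b" using assms(2) by (simp flip: funpow_add)
  then show "\<forall>x\<in>UNIV. (f ^^ (b - a) \<circ> f ^^ a) x = (id \<circ> f ^^ a) x" using assms(3) by simp
qed

lemma funpow_eq_iff_mod_card_powers:
  fixes f :: "'a \<Rightarrow> 'a"
  assumes bij: "bij f" and fin: "finite (range (\<lambda>r. f ^^ r))"
  shows "f ^^ a = f ^^ b \<longleftrightarrow> a mod card (range (\<lambda>r. f ^^ r)) = b mod card (range (\<lambda>r. f ^^ r))"
proof -
  have "\<not> inj (\<lambda>r. f ^^ r)" using fin finite_imageD by blast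
  then obtain a0 b0 where "a0 < b0" "f ^^ a0 = f ^^ b0"
    unfolding inj_def by (metis linorder_neqE_nat)
  then have period: "\<exists>d. 0 < d \<and> f ^^ d = id" using funpow_diff_eq_id[OF bij] by (intro exI[of _ "b0 - a0"]) auto
  define d where "d = (LEAST d. 0 < d \<and> f ^^ d = id)"
  have d: "0 < d" "f ^^ d = id" using LeastI_ex[OF period] unfolding d_def by blast+
  have mod: "f ^^ r = f ^^ (r mod d)" for r
    using funpow_mod_eq[where f = f and n = d] d(2) by (simp add: fun_eq_iff)
  have inj: "inj_on (\<lambda>r. f ^^ r) {..<d}"
  proof (rule linorder_inj_onI')
    fix i j assume "i \<in> {..<d}" "j \<in> {..<d}" "i < j"
    then have "0 < j - i" "j - i < d" by auto
    then have "\<not> (0 < j - i \<and> f ^^ (j - i) = id)"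
      using not_less_Least[of "j - i" "\<lambda>d. 0 < d \<and> f ^^ d = id"] unfolding d_def by blast
    then show "f ^^ i \<noteq> f ^^ j"
      using funpow_diff_eq_id[OF bij, of i j] \<open>i < j\<close> by auto
  qed
  have "range (\<lambda>r. f ^^ r) = (\<lambda>r. f ^^ r) ` {..<d}"
  proof (intro equalityI subsetI)
    fix g assume "g \<in> range (\<lambda>r. f ^^ r)"
    then obtain r where "g = f ^^ (r mod d)" using mod by blast
    then show "g \<in> (\<lambda>r. f ^^ r) ` {..<d}" using d(1) by simp
  qed auto
  then have "card (range (\<lambda>r. f ^^ r)) = d" using card_image[OF inj] by simp
  moreover have "f ^^ a = f ^^ b \<longleftrightarrow> a mod d = b mod d"
    using mod[of a] mod[of b] inj_onD[OF inj, of "a mod d" "b mod d"] d(1) by auto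
  ultimately show ?thesis by simp
qed

lemma bij_restr:
  assumes "bij h" "h ` A = A"
  shows "bij (restr A h)"
proof (rule o_bij)
  have "inv_into UNIV h ` A = A" using assms by (metis bij_is_inj image_inv_f_f)
  moreover have "h (inv_into UNIV h x) = x" "inv_into UNIV h (h x) = x" for x
    using assms(1) by (simp_all add: bij_is_inj bij_is_surj surj_f_inv_f)
  ultimately show "restr A h \<circ> restr A (inv_into UNIV h) = id" "restr A (inv_into UNIV h) \<circ> restr A h = id"
    using assms(2) by (auto simp: restr_def fun_eq_iff)
qed

lemma restr_conj:
  assumes "bij \<nu>"
  shows "restr (\<nu> ` A) (\<nu> \<circ> h \<circ> inv_into UNIV \<nu>) = \<nu> \<circ> restr A h \<circ> inv_into UNIV \<nu>"
proof -
  have inv: "\<nu> (inv_into UNIV \<nu> x) = x" "inv_into UNIV \<nu> (\<nu> x) = x" for x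
    using assms by (simp_all add: bij_is_surj surj_f_inv_f bij_is_inj)
  then have "x \<in> \<nu> ` A \<longleftrightarrow> inv_into UNIV \<nu> x \<in> A" for x by (metis image_iff)
  then show ?thesis using inv by (auto simp: restr_def fun_eq_iff)
qed

lemma funpow_conj:
  assumes "bij \<nu>"
  shows "(\<nu> \<circ> f \<circ> inv_into UNIV \<nu>) ^^ r = \<nu> \<circ> f ^^ r \<circ> inv_into UNIV \<nu>"
proof (induction r)
  case 0
  show ?case using assms by (simp add: fun_eq_iff bij_is_surj surj_f_inv_f)
next
  case (Suc r)
  then show ?case using assms by (simp add: fun_eq_iff bij_is_inj)
qed

lemma conj_eq_id_iff:
  assumes "bij \<nu>"
  shows "\<nu> \<circ> f \<circ> inv_into UNIV \<nu> = id \<longleftrightarrow> f = id"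
proof
  assume conj: "\<nu> \<circ> f \<circ> inv_into UNIV \<nu> = id"
  have "\<nu> (f x) = \<nu> x" for x
    using fun_cong[OF conj, of "\<nu> x"] assms by (simp add: bij_is_inj)
  then show "f = id" using bij_is_inj[OF assms] by (auto simp: fun_eq_iff inj_eq)
qed (use assms in \<open>simp add: fun_eq_iff bij_is_surj surj_f_inv_f\<close>)

lemma perm_subgroup_bij: "perm_subgroup n H \<Longrightarrow> h \<in> H \<Longrightarrow> bij h"
  unfolding perm_subgroup_def using permutes_bij by blast

lemma orbit_of_conj:
  assumes "inj \<nu>" and "(\<lambda>h. \<nu> \<circ> h \<circ> inv_into UNIV \<nu>) ` H = H"
  shows "\<nu> ` orbit_of H x = orbit_of H (\<nu> x)"
proof -
  have "orbit_of H (\<nu> x) = (\<lambda>h. h (\<nu> x)) ` (\<lambda>h. \<nu> \<circ> h \<circ> inv_into UNIV \<nu>) ` H"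
    unfolding orbit_of_def assms(2) by blast
  also have "\<dots> = \<nu> ` orbit_of H x"
    using assms(1) unfolding orbit_of_def by (auto simp: image_image)
  finally show ?thesis ..
qed

lemma image_orbit_of:
  assumes H: "perm_subgroup n H" and h: "h \<in> H"
  shows "h ` orbit_of H x = orbit_of H x"
proof (intro equalityI subsetI)
  fix y assume "y \<in> h ` orbit_of H x"
  then obtain h' where "h' \<in> H" "y = (h \<circ> h') x" unfolding orbit_of_def by auto
  then show "y \<in> orbit_of H x" using H h unfolding perm_subgroup_def orbit_of_def by blast
next
  fix y assume "y \<in> orbit_of H x"
  then obtain h' where h': "h' \<in> H" "y = h' x" unfolding orbit_of_def by auto
  have "inv_into UNIV h \<circ> h' \<in> H" using H h h'(1) unfolding perm_subgroup_def by blast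
  moreover have "y = h ((inv_into UNIV h \<circ> h') x)"
    using perm_subgroup_bij[OF H h] h'(2) by (simp add: bij_is_surj surj_f_inv_f)
  ultimately show "y \<in> h ` orbit_of H x" unfolding orbit_of_def by blast
qed

lemma orbit_of_eq_if_mem:
  assumes H: "perm_subgroup n H" and y: "y \<in> orbit_of H x"
  shows "orbit_of H y = orbit_of H x"
proof -
  obtain h where h: "h \<in> H" "y = h x" using y unfolding orbit_of_def by blast
  have "orbit_of H y = (\<lambda>h'. h' (h x)) ` H" unfolding h orbit_of_def by blast
  also have "\<dots> = (\<lambda>h'. h' x) ` (\<lambda>h'. h' \<circ> h) ` H" by (simp add: image_image)
  also have "(\<lambda>h'. h' \<circ> h) ` H = H"
  proof (intro equalityI subsetI)
    fix h' assume "h' \<in> H"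
    moreover have "h' = (h' \<circ> inv_into UNIV h) \<circ> h"
      using perm_subgroup_bij[OF H h(1)] by (simp add: fun_eq_iff bij_is_inj)
    ultimately show "h' \<in> (\<lambda>h'. h' \<circ> h) ` H" using H h(1) unfolding perm_subgroup_def by blast
  qed (use H h(1) in \<open>auto simp: perm_subgroup_def\<close>)
  finally show ?thesis unfolding orbit_of_def by blast
qed

lemma bij_betw_indices_if_image_UN_eq:
  fixes \<Omega> :: "'i \<Rightarrow> 'a set"
  assumes disj: "disjoint_family_on \<Omega> K" and ne: "\<And>i. i \<in> K \<Longrightarrow> \<Omega> i \<noteq> {}" and "inj f"
    and I: "I \<subseteq> K" and J: "J \<subseteq> K" and \<sigma>: "\<And>i. i \<in> I \<Longrightarrow> \<sigma> i \<in> K \<and> f ` \<Omega> i = \<Omega> (\<sigma> i)"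
    and UN: "f ` (\<Union>i\<in>I. \<Omega> i) = (\<Union>j\<in>J. \<Omega> j)"
  shows "bij_betw \<sigma> I J"
proof -
  have eq: "i = j" if "i \<in> K" "j \<in> K" "x \<in> \<Omega> i" "x \<in> \<Omega> j" for i j x
    using disjoint_family_onD[OF disj, of i j] that by blast
  have "inj_on \<sigma> I"
  proof (rule inj_onI)
    fix i i' assume i: "i \<in> I" "i' \<in> I" "\<sigma> i = \<sigma> i'"
    then have "\<Omega> i = \<Omega> i'" using \<sigma> inj_image_eq_iff[OF \<open>inj f\<close>] by metis
    moreover obtain x where "x \<in> \<Omega> i" using ne i(1) I by blast
    ultimately show "i = i'" using eq i(1,2) I by blast
  qed
  moreover have "\<sigma> i \<in> J" if i: "i \<in> I" for i
  proof -
    obtain x where "x \<in> \<Omega> i" using ne i I by blast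
    then have "f x \<in> \<Omega> (\<sigma> i)" "f x \<in> (\<Union>j\<in>J. \<Omega> j)" using \<sigma>[OF i] UN i by blast+
    then obtain j where "j \<in> J" "f x \<in> \<Omega> j" by blast
    then show ?thesis using eq[of "\<sigma> i" j "f x"] \<sigma>[OF i] J \<open>f x \<in> \<Omega> (\<sigma> i)\<close> by auto
  qed
  moreover have "j \<in> \<sigma> ` I" if j: "j \<in> J" for j
  proof -
    obtain y where "y \<in> \<Omega> j" using ne j J by blast
    then have "y \<in> f ` (\<Union>i\<in>I. \<Omega> i)" using UN j by blast
    then obtain i x where "i \<in> I" "x \<in> \<Omega> i" "y = f x" by blast
    then have "\<sigma> i = j" using eq[of "\<sigma> i" j y] \<sigma> \<open>y \<in> \<Omega> j\<close> j J by blast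
    then show ?thesis using \<open>i \<in> I\<close> by blast
  qed
  ultimately show ?thesis unfolding bij_betw_def by blast
qed

section \<open>Normalizers in the setting of the lemma\<close>

lemma of_nat_mod_ring_eq_iff:
  "(of_nat a :: 'q::nontriv mod_ring) = of_nat b \<longleftrightarrow> a mod CARD('q) = b mod CARD('q)"
  by (simp add: of_nat_eq_iff_cong_CHAR cong_def)

locale InP_Cp =
  fixes p k n :: nat and H :: "(nat \<Rightarrow> nat) set" and \<Omega> :: "nat \<Rightarrow> nat set"
    and g :: "nat \<Rightarrow> nat \<Rightarrow> nat"
  assumes setting: "InP_Cp_setting p k n H \<Omega> g"
begin

lemma prime: "prime p"
  using setting unfolding InP_Cp_setting_def by (elim conjE)

lemma perm_subgroup: "perm_subgroup n H"
  using setting unfolding InP_Cp_setting_def by (elim conjE)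

lemma \<Omega>_orbit: "i < k \<Longrightarrow> \<exists>x<n. \<Omega> i = orbit_of H x"
  using setting unfolding InP_Cp_setting_def by (elim conjE) simp

lemma \<Omega>_cover: "x < n \<Longrightarrow> \<exists>i<k. x \<in> \<Omega> i"
  using setting unfolding InP_Cp_setting_def by (elim conjE) simp

lemma disjoint_family_\<Omega>: "disjoint_family_on \<Omega> {0..<k}"
  using setting unfolding InP_Cp_setting_def disjoint_family_on_def by (elim conjE) simp

lemma card_\<Omega>: "i < k \<Longrightarrow> card (\<Omega> i) = p"
  using setting unfolding InP_Cp_setting_def by (elim conjE) simp

lemma \<Omega>_nonempty: "i < k \<Longrightarrow> \<Omega> i \<noteq> {}"
  using card_\<Omega> prime_gt_0_nat[OF prime] by fastforce

lemma g_generates: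
  assumes "i < k"
  shows "g i \<in> restr (\<Omega> i) ` H" and "restr (\<Omega> i) ` H = range (\<lambda>r. g i ^^ r)"
    and "card (restr (\<Omega> i) ` H) = p"
  using setting assms unfolding InP_Cp_setting_def by (elim conjE; simp)+

lemma funpow_g_eq_iff:
  assumes "i < k"
  shows "g i ^^ a = g i ^^ b \<longleftrightarrow> a mod p = b mod p"
proof -
  obtain h x where h: "h \<in> H" "g i = restr (\<Omega> i) h" and x: "\<Omega> i = orbit_of H x"
    using g_generates(1)[OF assms] \<Omega>_orbit[OF assms] by blast
  have "h ` \<Omega> i = \<Omega> i" using image_orbit_of[OF perm_subgroup h(1)] x by simp
  then have "bij (g i)" using bij_restr[OF perm_subgroup_bij[OF perm_subgroup h(1)]] h(2) by simp
  moreover have "card (range (\<lambda>r. g i ^^ r)) = p"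
    using g_generates[OF assms] by simp
  moreover have "finite (range (\<lambda>r. g i ^^ r))"
    using calculation(2) prime by (intro card_ge_0_finite) (simp add: prime_gt_0_nat)
  ultimately show ?thesis using funpow_eq_iff_mod_card_powers[of "g i"] by simp
qed

lemma restr_eq_funpow_g:
  assumes "h \<in> H" "i < k"
  obtains r where "restr (\<Omega> i) h = g i ^^ r"
  using g_generates(2)[OF assms(2)] assms(1) by blast

lemma gamma_nth:
  assumes "CARD('q::prime_card) = p" "i < k" "restr (\<Omega> i) h = g i ^^ r"
  shows "(gamma k \<Omega> g h :: 'q mod_ring vec) $ i = of_nat r"
proof -
  let ?r = "LEAST r. restr (\<Omega> i) h = g i ^^ r"
  have "restr (\<Omega> i) h = g i ^^ ?r" by (rule LeastI[of _ r]) (rule assms(3))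
  then have "g i ^^ ?r = g i ^^ r" using assms(3) by simp
  then have "?r mod p = r mod p" using funpow_g_eq_iff[OF assms(2)] by simp
  then show ?thesis using assms(1,2) by (simp add: gamma_def of_nat_mod_ring_eq_iff)
qed

lemma normalizer_image_\<Omega>:
  assumes \<nu>: "\<nu> permutes {0..<n}" and norm: "(\<lambda>h. \<nu> \<circ> h \<circ> inv_into UNIV \<nu>) ` H = H" and "i < k"
  shows "\<exists>j<k. \<nu> ` \<Omega> i = \<Omega> j"
proof -
  obtain x where x: "x < n" "\<Omega> i = orbit_of H x" using \<Omega>_orbit[OF \<open>i < k\<close>] by blast
  then have "\<nu> x < n" using permutes_in_image[OF \<nu>] by simp
  then obtain j where j: "j < k" "\<nu> x \<in> \<Omega> j" using \<Omega>_cover by blast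
  obtain y where "\<Omega> j = orbit_of H y" using \<Omega>_orbit[OF j(1)] by blast
  then have "\<Omega> j = orbit_of H (\<nu> x)" using orbit_of_eq_if_mem[OF perm_subgroup] j(2) by simp
  also have "\<dots> = \<nu> ` \<Omega> i"
    using x(2) orbit_of_conj[OF bij_is_inj[OF permutes_bij[OF \<nu>]] norm] by simp
  finally show ?thesis using j(1) by auto
qed

lemma normalizer_bij_betw_indices:
  assumes \<nu>: "\<nu> permutes {0..<n}" and norm: "(\<lambda>h. \<nu> \<circ> h \<circ> inv_into UNIV \<nu>) ` H = H"
    and I: "I \<subseteq> {0..<k}" and J: "J \<subseteq> {0..<k}" and UN: "\<nu> ` (\<Union>i\<in>I. \<Omega> i) = (\<Union>j\<in>J. \<Omega> j)"
  obtains \<sigma> where "bij_betw \<sigma> I J" and "\<And>i. i \<in> I \<Longrightarrow> \<sigma> i < k \<and> \<nu> ` \<Omega> i = \<Omega> (\<sigma> i)"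
proof -
  have "\<forall>i\<in>I. \<exists>j. j < k \<and> \<nu> ` \<Omega> i = \<Omega> j"
    using normalizer_image_\<Omega>[OF \<nu> norm] I by (auto simp: subset_iff)
  from bchoice[OF this] obtain \<sigma> where \<sigma>: "\<forall>i\<in>I. \<sigma> i < k \<and> \<nu> ` \<Omega> i = \<Omega> (\<sigma> i)" ..
  then have "bij_betw \<sigma> I J"
    using bij_betw_indices_if_image_UN_eq[OF disjoint_family_\<Omega> _ bij_is_inj[OF permutes_bij[OF \<nu>]] I J _ UN]
      \<Omega>_nonempty by simp
  then show thesis using that \<sigma> by blast
qed

lemma gamma_conj_nth:
  assumes q: "CARD('q::prime_card) = p" and \<nu>: "\<nu> permutes {0..<n}"
    and norm: "(\<lambda>h. \<nu> \<circ> h \<circ> inv_into UNIV \<nu>) ` H = H"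
    and ij: "i < k" "j < k" "\<nu> ` \<Omega> i = \<Omega> j"
  shows "\<exists>b :: 'q mod_ring. b \<noteq> 0 \<and> (\<forall>h\<in>H.
    (gamma k \<Omega> g (\<nu> \<circ> h \<circ> inv_into UNIV \<nu>) :: 'q mod_ring vec) $ j = b * (gamma k \<Omega> g h :: 'q mod_ring vec) $ i)"
proof -
  let ?conj = "\<lambda>f. \<nu> \<circ> f \<circ> inv_into UNIV \<nu>"
  have bij: "bij \<nu>" using permutes_bij[OF \<nu>] .
  have restr: "restr (\<Omega> j) (?conj f) = ?conj (restr (\<Omega> i) f)" for f
    using restr_conj[OF bij, of "\<Omega> i"] ij(3) by simp
  obtain h0 where h0: "h0 \<in> H" "g i = restr (\<Omega> i) h0" using g_generates(1)[OF ij(1)] by blast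
  have "?conj h0 \<in> H" using norm h0(1) by blast
  then obtain e where e: "?conj (g i) = g j ^^ e"
    using restr_eq_funpow_g[OF _ ij(2)] restr h0(2) by metis
  have "e mod p \<noteq> 0"
  proof
    assume "e mod p = 0"
    then have "?conj (g i) = id" using e funpow_g_eq_iff[OF ij(2), of e 0] by simp
    then have "g i ^^ 1 = g i ^^ 0" using conj_eq_id_iff[OF bij] by simp
    then show False using funpow_g_eq_iff[OF ij(1), of 1 0] prime_gt_1_nat[OF prime] by simp
  qed
  then have "(of_nat e :: 'q mod_ring) \<noteq> 0" using of_nat_mod_ring_eq_iff[where 'q = 'q, of e 0] q by simp
  moreover have "(gamma k \<Omega> g (?conj h) :: 'q mod_ring vec) $ j = of_nat e * (gamma k \<Omega> g h :: 'q mod_ring vec) $ i"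
    if h: "h \<in> H" for h
  proof -
    obtain r where r: "restr (\<Omega> i) h = g i ^^ r" using restr_eq_funpow_g[OF h ij(1)] .
    have "restr (\<Omega> j) (?conj h) = (?conj (g i)) ^^ r" using restr r funpow_conj[OF bij] by simp
    also have "\<dots> = g j ^^ (e * r)" by (simp add: e funpow_mult)
    finally show ?thesis using gamma_nth[OF q ij(2)] gamma_nth[OF q ij(1) r] by simp
  qed
  ultimately show ?thesis by blast
qed

lemma normalizer_coords_lin_dep_gamma:
  assumes q: "CARD('q::prime_card) = p" and \<nu>: "\<nu> permutes {0..<n}"
    and norm: "(\<lambda>h. \<nu> \<circ> h \<circ> inv_into UNIV \<nu>) ` H = H"
    and I: "I \<subseteq> {0..<k}" and J: "J \<subseteq> {0..<k}" and UN: "\<nu> ` (\<Union>i\<in>I. \<Omega> i) = (\<Union>j\<in>J. \<Omega> j)"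
  obtains \<sigma> where "bij_betw \<sigma> I J" and "\<And>S. S \<subseteq> I \<Longrightarrow>
    coords_lin_dep ((gamma k \<Omega> g :: _ \<Rightarrow> 'q mod_ring vec) ` H) (\<sigma> ` S)
      \<longleftrightarrow> coords_lin_dep ((gamma k \<Omega> g :: _ \<Rightarrow> 'q mod_ring vec) ` H) S"
proof -
  let ?\<gamma> = "gamma k \<Omega> g :: _ \<Rightarrow> 'q mod_ring vec"
  obtain \<sigma> where \<sigma>: "bij_betw \<sigma> I J" "\<And>i. i \<in> I \<Longrightarrow> \<sigma> i < k \<and> \<nu> ` \<Omega> i = \<Omega> (\<sigma> i)"
    using normalizer_bij_betw_indices[OF \<nu> norm I J UN] by blast
  have "\<forall>i\<in>I. \<exists>c :: 'q mod_ring. c \<noteq> 0 \<and> (\<forall>h\<in>H. ?\<gamma> (\<nu> \<circ> h \<circ> inv_into UNIV \<nu>) $ \<sigma> i = c * ?\<gamma> h $ i)"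
  proof
    fix i assume "i \<in> I"
    then have "i < k" "\<sigma> i < k" "\<nu> ` \<Omega> i = \<Omega> (\<sigma> i)" using I \<sigma>(2) by auto
    then show "\<exists>c. c \<noteq> 0 \<and> (\<forall>h\<in>H. ?\<gamma> (\<nu> \<circ> h \<circ> inv_into UNIV \<nu>) $ \<sigma> i = c * ?\<gamma> h $ i)"
      by (rule gamma_conj_nth[OF q \<nu> norm])
  qed
  from bchoice[OF this] obtain b where b: "\<forall>i\<in>I. b i \<noteq> 0 \<and>
    (\<forall>h\<in>H. ?\<gamma> (\<nu> \<circ> h \<circ> inv_into UNIV \<nu>) $ \<sigma> i = b i * ?\<gamma> h $ i)" ..
  have "coords_lin_dep (?\<gamma> ` H) (\<sigma> ` S) \<longleftrightarrow> coords_lin_dep (?\<gamma> ` H) S" if S: "S \<subseteq> I" for S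
    using S b inj_on_subset[OF bij_betw_imp_inj_on[OF \<sigma>(1)] S]
    by (intro coords_lin_dep_monomial[OF norm]) auto
  then show thesis using that \<sigma>(1) by blast
qed

end

theorem lemma5p3:
  fixes k n :: nat and H :: "(nat \<Rightarrow> nat) set" and \<Omega> :: "nat \<Rightarrow> nat set"
    and g :: "nat \<Rightarrow> nat \<Rightarrow> nat" and M :: "'p::prime_card mod_ring mat"
    and I J :: "nat set" and \<nu> :: "nat \<Rightarrow> nat"
  assumes "InP_Cp_setting CARD('p) k n H \<Omega> g"
    and "generator_matrix k ((gamma k \<Omega> g :: (nat \<Rightarrow> nat) \<Rightarrow> 'p mod_ring vec) ` H) M"
    and "I \<subseteq> {0..<k}" and "J \<subseteq> {0..<k}"
    and "\<nu> permutes {0..<n}" and "(\<lambda>h. \<nu> \<circ> h \<circ> inv_into UNIV \<nu>) ` H = H"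
    and "\<nu> ` (\<Union>i\<in>I. \<Omega> i) = (\<Union>j\<in>J. \<Omega> j)"
  shows "mat_rank (cols_sub M I) = mat_rank (cols_sub M J)
     \<and> (cols_min_lin_dep (cols_sub M I) \<longleftrightarrow> cols_min_lin_dep (cols_sub M J))"
proof -
  interpret InP_Cp "CARD('p)" k n H \<Omega> g by unfold_locales (rule assms(1))
  let ?\<gamma> = "gamma k \<Omega> g :: (nat \<Rightarrow> nat) \<Rightarrow> 'p mod_ring vec"
  obtain \<sigma> where \<sigma>: "bij_betw \<sigma> I J"
    and coords: "\<And>S. S \<subseteq> I \<Longrightarrow> coords_lin_dep (?\<gamma> ` H) (\<sigma> ` S) \<longleftrightarrow> coords_lin_dep (?\<gamma> ` H) S"
    using normalizer_coords_lin_dep_gamma[OF refl assms(5,6,3,4,7)] by blast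
  have "cols_lin_dep M (\<sigma> ` S) \<longleftrightarrow> cols_lin_dep M S" if "S \<subseteq> I" for S
  proof -
    have "\<sigma> ` S \<subseteq> {0..<k}" "S \<subseteq> {0..<k}"
      using that assms(3,4) bij_betw_imp_surj_on[OF \<sigma>] by blast+
    then show ?thesis using cols_lin_dep_generator_matrix[OF assms(2)] coords[OF that] by simp
  qed
  moreover have "dim_col M = k" using assms(2) by (simp add: generator_matrix_def)
  ultimately show ?thesis
    using assms(3,4) \<sigma> by (intro cols_sub_rank_min_lin_dep_eq) auto
qed

end
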